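(* Let $u$ be a one-sided Sturmian sequence with left special sequence $l=l_1l_2\dots$. Let $xl_1l_2\dots l_{n-1}$ and $wl_1\dots l_{m-1}$ with $1\le m<n$ and $x,w\in\{0,1\}$ be consecutive right special significant blocks of $\tilde X_u$, and let $y\in\{0,1\}$ with $y\neq l_n$. Then $\mathrm{sig}(xl_1l_2\dots l_{n-1}y)=\mathrm{sig}(wl_1\dots l_{m-1}y)$.
   Context: A sequence $u\in\{0,1\}^{\mathbb N}$ is Sturmian if for every $n\ge1$ exactly $n+1$ distinct blocks of length $n$ occur in $u$. $X_u^+$ is the closure of $\{\sigma^n u:n\in\mathbb N\}$, $\sigma$ the shift $(\sigma x)_i=x_{i+1}$, and $\tilde X_u=\{x\in\{0,1\}^{\mathbb Z}: x_px_{p+1}\dots\in X_u^+\ \forall p\}$; the languages of $u$, $X_u^+$, $\tilde X_u$ coincide. For each $n$ there is a unique block $L_n$ of length $n$ with $0L_n$ and $1L_n$ in the language; these are the prefixes $L_n=l_1\dots l_n$ of the left special sequence $l$. A block $v$ is right special if both $v0$ and $v1$ are in the language; the right special block of length $n$ is $l_nl_{n-1}\dots l_1$. For a block $a_{-n}\dots a_0$ in the language, $\mathrm{fol}(a_{-n}\dots a_0)=\{b_0b_1\dots\in X_u^+:\exists b\in\tilde X_u,\ b_{-n}\dots b_0=a_{-n}\dots a_0\}$. A block $a_{-n}\dots a_0$ ($n\ge1$) is significant if $\mathrm{fol}(a_{-n}\dots a_0)\subsetneq\mathrm{fol}(a_{-n+1}\dots a_0)$; $0$ and $1$ are also significant.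 $\mathrm{sig}(\cdot)$ is the longest significant suffix. For $m=1$ the block $wl_1\dots l_{m-1}$ is the single symbol $w$. The two blocks being consecutive means both are right special significant blocks and there is no right special significant block of length strictly between $m$ and $n$. *)

theory Defs
  imports Main
begin

text \<open>Alphabet {0,1} is rendered as bool (False = 0, True = 1).
  One-sided sequences: nat => bool; two-sided: int => bool; blocks: bool lists.\<close>

definition occurs_in :: "(nat \<Rightarrow> bool) \<Rightarrow> bool list \<Rightarrow> bool" where
  "occurs_in u v \<longleftrightarrow> (\<exists>k. \<forall>i<length v. u (k + i) = v ! i)"

definition lang :: "(nat \<Rightarrow> bool) \<Rightarrow> bool list set" where
  "lang u = {v. occurs_in u v}"

definition sturmian :: "(nat \<Rightarrow> bool) \<Rightarrow> bool" where
  "sturmian u \<longleftrightarrow> (\<forall>n\<ge>1. card {v \<in> lang u. length v = n} = n + 1)"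

text \<open>Closure of the forward orbit of u in the product topology on {0,1}^N:
  a sequence lies in it iff every prefix occurs in u.\<close>
definition Xplus :: "(nat \<Rightarrow> bool) \<Rightarrow> (nat \<Rightarrow> bool) set" where
  "Xplus u = {x. \<forall>n. \<exists>k. \<forall>i<n. x i = u (k + i)}"

definition Xtilde :: "(nat \<Rightarrow> bool) \<Rightarrow> (int \<Rightarrow> bool) set" where
  "Xtilde u = {x. \<forall>p::int. (\<lambda>i::nat. x (p + int i)) \<in> Xplus u}"

text \<open>fol(a_{-n}..a_0): the block a (a list of length n+1) sits at positions -n..0.\<close>
definition fol :: "(nat \<Rightarrow> bool) \<Rightarrow> bool list \<Rightarrow> (nat \<Rightarrow> bool) set" where
  "fol u a = {(\<lambda>i::nat. b (int i)) | b. b \<in> Xtilde u \<and>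
      (\<forall>i<length a. b (int i - int (length a - 1)) = a ! i)}"

definition significant :: "(nat \<Rightarrow> bool) \<Rightarrow> bool list \<Rightarrow> bool" where
  "significant u v \<longleftrightarrow> v \<in> lang u \<and>
     (length v = 1 \<or> (length v \<ge> 2 \<and> fol u v \<subset> fol u (tl v)))"

definition sig :: "(nat \<Rightarrow> bool) \<Rightarrow> bool list \<Rightarrow> bool list" where
  "sig u v = drop (LEAST k. k < length v \<and> significant u (drop k v)) v"

definition right_special :: "(nat \<Rightarrow> bool) \<Rightarrow> bool list \<Rightarrow> bool" where
  "right_special u v \<longleftrightarrow> v @ [False] \<in> lang u \<and> v @ [True] \<in> lang u"

definition left_special :: "(nat \<Rightarrow> bool) \<Rightarrow> bool list \<Rightarrow> bool" where
  "left_special u v \<longleftrightarrow> False # v \<in> lang u \<and> True # v \<in> lang u"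

text \<open>l is the left special sequence l_1 l_2 ... (value l 0 unused):
  every prefix L_n = l_1 ... l_n is left special.\<close>
definition left_special_seq :: "(nat \<Rightarrow> bool) \<Rightarrow> (nat \<Rightarrow> bool) \<Rightarrow> bool" where
  "left_special_seq u l \<longleftrightarrow> (\<forall>n. left_special u (map l [1..<n+1]))"

end

theory Submission
  imports Defs
begin

text \<open>Write L = l_1 ... l_(n-1) and M = l_1 ... l_(m-1). The suffix of length m of the
  right special block x L is again right special, and a Sturmian language has exactly one
  right special block of each length (complexity n + 1), so this suffix is w M. It remains to
  see that no suffix of x L y longer than w M y is significant. For an intermediate suffix
  s y this holds because s is not significant, and fol(tl s) = fol(s) implies
  fol(tl s y) \<subseteq> fol(s y). For the whole block, x is the only letter that can precede L y:
  the other letter x' can be followed by L l_n, since L l_n is left special, so if x' L y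
  occurred then x' L would be a second right special block of length n.\<close>

definition window :: "(int \<Rightarrow> bool) \<Rightarrow> int \<Rightarrow> nat \<Rightarrow> bool list" where
  "window b p k = map (\<lambda>i. b (p + int i)) [0..<k]"

lemma length_window [simp]: "length (window b p k) = k"
  by (simp add: window_def)

lemma window_add: "window b p (k + j) = window b p k @ window b (p + int k) j"
  by (rule nth_equalityI) (auto simp: window_def nth_append algebra_simps)

lemma window_Suc: "window b p (Suc k) = b p # window b (p + 1) k"
  using window_add[of b p 1 k] by (simp add: window_def)

lemma window_Suc_snoc: "window b p (Suc k) = window b p k @ [b (p + int k)]"
  using window_add[of b p k 1] by (simp add: window_def)

lemma window_shift: "window (\<lambda>t. b (t + c)) p k = window b (p + c) k"
  by (simp add: window_def algebra_simps)

lemma Xtilde_shift: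
  assumes "b \<in> Xtilde u"
  shows "(\<lambda>t. b (t + c)) \<in> Xtilde u"
  unfolding Xtilde_def
proof (intro CollectI allI)
  fix p :: int
  have "(\<lambda>i::nat. b (p + c + int i)) \<in> Xplus u" using assms by (simp add: Xtilde_def)
  then show "(\<lambda>i::nat. b (p + int i + c)) \<in> Xplus u" by (simp add: algebra_simps)
qed

lemma window_in_lang: "b \<in> Xtilde u \<Longrightarrow> window b p k \<in> lang u"
proof -
  assume "b \<in> Xtilde u"
  then have "(\<lambda>i::nat. b (p + int i)) \<in> Xplus u" by (simp add: Xtilde_def)
  then obtain j where "\<forall>i<k. b (p + int i) = u (j + i)" by (auto simp: Xplus_def)
  then show ?thesis by (auto simp: lang_def occurs_in_def window_def)
qed

lemma window_eq_iff: "window b p k = a \<longleftrightarrow> length a = k \<and> (\<forall>i<k. b (p + int i) = a ! i)"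
  by (auto simp: window_def list_eq_iff_nth_eq)

lemma fol_window:
  "fol u a = {(\<lambda>i. b (int i)) | b. b \<in> Xtilde u \<and> window b (1 - int (length a)) (length a) = a}"
proof -
  have idx: "1 - int (length a) + int i = int i - int (length a - 1)" if "i < length a" for i
    using that by linarith
  have "window b (1 - int (length a)) (length a) = a \<longleftrightarrow>
      (\<forall>i<length a. b (int i - int (length a - 1)) = a ! i)" for b
    by (simp add: window_eq_iff idx del: of_nat_diff)
  then show ?thesis by (simp add: fol_def)
qed

lemma fol_windowI:
  assumes "b \<in> Xtilde u" "window b (1 - int (length a)) (length a) = a"
  shows "(\<lambda>i. b (int i)) \<in> fol u a"
  unfolding fol_window using assms by (intro CollectI exI[of _ b]) simp

lemma fol_windowE:
  assumes "z \<in> fol u a"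
  obtains b where "b \<in> Xtilde u" "z = (\<lambda>i. b (int i))"
    "window b (1 - int (length a)) (length a) = a"
  using assms unfolding fol_window by blast

lemma fol_tl_subset: "fol u a \<subseteq> fol u (tl a)"
proof (cases a)
  case (Cons c a')
  show ?thesis
  proof
    fix z assume "z \<in> fol u a"
    then obtain b where b: "b \<in> Xtilde u" "z = (\<lambda>i. b (int i))"
      "window b (- int (length a')) (Suc (length a')) = c # a'"
      by (rule fol_windowE) (simp add: Cons)
    then have "window b (1 - int (length a')) (length a') = a'"
      by (simp add: window_Suc add.commute)
    then show "z \<in> fol u (tl a)" using b(1,2) Cons by (simp add: fol_windowI)
  qed
qed simp

lemma fol_subset_Cons:
  assumes "\<And>z. z # v \<in> lang u \<Longrightarrow> z = x"
  shows "fol u v \<subseteq> fol u (x # v)"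
proof
  fix z assume "z \<in> fol u v"
  then obtain b where b: "b \<in> Xtilde u" "z = (\<lambda>i. b (int i))"
    "window b (1 - int (length v)) (length v) = v"
    by (rule fol_windowE)
  then have "window b (- int (length v)) (Suc (length v)) = b (- int (length v)) # v"
    by (simp add: window_Suc add.commute)
  moreover have "b (- int (length v)) = x"
    using assms window_in_lang[OF b(1)] calculation by metis
  ultimately have "window b (1 - int (length (x # v))) (length (x # v)) = x # v" by simp
  then show "z \<in> fol u (x # v)" using b(1,2) by (simp add: fol_windowI)
qed

lemma fol_subset_extend:
  assumes "fol u a' \<subseteq> fol u a" "b \<in> Xtilde u"
    and "window b (p + 1 - int (length a')) (length a') = a'"
  obtains d where "d \<in> Xtilde u" "\<forall>t\<ge>p. d t = b t"
    "window d (p + 1 - int (length a)) (length a) = a"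
proof -
  have "window (\<lambda>t. b (t + p)) (1 - int (length a')) (length a') = a'"
    using assms(3) by (simp add: window_shift add_diff_eq add.commute)
  then have "(\<lambda>i. b (int i + p)) \<in> fol u a'"
    using Xtilde_shift[OF assms(2)] by (rule fol_windowI[rotated])
  then obtain c where c: "c \<in> Xtilde u" "(\<lambda>i. b (int i + p)) = (\<lambda>i. c (int i))"
      "window c (1 - int (length a)) (length a) = a"
    using assms(1) by (blast elim: fol_windowE)
  show ?thesis
  proof
    show "(\<lambda>t. c (t - p)) \<in> Xtilde u" using Xtilde_shift[OF c(1), of "- p"] by simp
    show "\<forall>t\<ge>p. c (t - p) = b t"
    proof (intro allI impI)
      fix t assume "p \<le> t"
      then show "c (t - p) = b t" using fun_cong[OF c(2), of "nat (t - p)"] by simp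
    qed
    show "window (\<lambda>t. c (t - p)) (p + 1 - int (length a)) (length a) = a"
      using c(3) window_shift[of c "- p"] by simp
  qed
qed

lemma fol_snoc_mono:
  assumes "fol u (tl s) \<subseteq> fol u s"
  shows "fol u (tl s @ [y]) \<subseteq> fol u (s @ [y])"
proof (cases s)
  case (Cons c s')
  show ?thesis
  proof
    fix z assume "z \<in> fol u (tl s @ [y])"
    then obtain b where b: "b \<in> Xtilde u" "z = (\<lambda>i. b (int i))"
      "window b (- int (length s')) (Suc (length s')) = s' @ [y]"
      by (rule fol_windowE) (simp add: Cons)
    then have "window b (- 1 + 1 - int (length s')) (length s') = s'" "b 0 = y"
      by (simp_all add: window_Suc_snoc)
    then obtain d where d: "d \<in> Xtilde u" "\<forall>t\<ge>-1. d t = b t"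
      "window d (- int (length s)) (length s) = s"
      using fol_subset_extend[OF assms b(1), of "-1"] by (auto simp: Cons)
    have "window d (1 - int (length (s @ [y]))) (length (s @ [y])) = s @ [y]"
      using d \<open>b 0 = y\<close> by (simp add: window_Suc_snoc)
    moreover have "z = (\<lambda>i. d (int i))" using b(2) d(2) by auto
    ultimately show "z \<in> fol u (s @ [y])" using d(1) by (simp add: fol_windowI)
  qed
qed simp

lemma not_significant_if_fol_tl_subset:
  "fol u (tl v) \<subseteq> fol u v \<Longrightarrow> 2 \<le> length v \<Longrightarrow> \<not> significant u v"
  by (auto simp: significant_def)

lemma lang_appendD: "v @ w \<in> lang u \<Longrightarrow> v \<in> lang u \<and> w \<in> lang u"
proof -
  assume "v @ w \<in> lang u"
  then obtain k where k: "\<forall>i<length v + length w. u (k + i) = (v @ w) ! i"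
    by (auto simp: lang_def occurs_in_def)
  have "\<forall>i<length v. u (k + i) = v ! i"
    using k by (auto simp: nth_append)
  moreover have "\<forall>i<length w. u (k + length v + i) = w ! i"
    using k by (auto simp: nth_append add.assoc dest: spec[of _ "length v + _"])
  ultimately show ?thesis by (auto simp: lang_def occurs_in_def)
qed

lemma lang_snoc_exists: "v \<in> lang u \<Longrightarrow> \<exists>a. v @ [a] \<in> lang u"
proof -
  assume "v \<in> lang u"
  then obtain k where "\<forall>i<length v. u (k + i) = v ! i" by (auto simp: lang_def occurs_in_def)
  then have "v @ [u (k + length v)] \<in> lang u"
    by (auto simp: lang_def occurs_in_def nth_append less_Suc_eq)
  then show ?thesis ..
qed

lemma right_special_in_lang: "right_special u v \<Longrightarrow> v \<in> lang u"
  by (auto simp: right_special_def dest: lang_appendD)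

lemma right_special_drop: "right_special u v \<Longrightarrow> right_special u (drop k v)"
  unfolding right_special_def
  by (metis append_assoc append_take_drop_id lang_appendD)

lemma card_lang_Suc:
  "card {v \<in> lang u. length v = Suc k} =
     card {v \<in> lang u. length v = k} + card {v. length v = k \<and> right_special u v}"
proof -
  define A where "A b = {v \<in> lang u. length v = k \<and> v @ [b] \<in> lang u}" for b
  have fin: "finite (A b)" for b
    by (rule finite_subset[OF _ finite_lists_length_eq[of "UNIV :: bool set" k]])
      (auto simp: A_def)
  have "{v \<in> lang u. length v = Suc k} = (\<lambda>v. v @ [False]) ` A False \<union> (\<lambda>v. v @ [True]) ` A True"
  proof (intro equalityI subsetI)
    fix v assume v: "v \<in> {v \<in> lang u. length v = Suc k}"
    then have vs: "v = butlast v @ [last v]" by (auto intro: append_butlast_last_id[symmetric])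
    then have "butlast v \<in> lang u" using v lang_appendD[of "butlast v" "[last v]" u] by auto
    with v vs show "v \<in> (\<lambda>v. v @ [False]) ` A False \<union> (\<lambda>v. v @ [True]) ` A True"
      by (cases "last v") (auto simp: A_def intro!: image_eqI[of _ _ "butlast v"])
  qed (auto simp: A_def)
  also have "card \<dots> = card ((\<lambda>v. v @ [False]) ` A False) + card ((\<lambda>v. v @ [True]) ` A True)"
    by (rule card_Un_disjoint) (use fin in auto)
  also have "\<dots> = card (A False) + card (A True)"
    by (simp add: card_image inj_on_def)
  also have "\<dots> = card (A False \<union> A True) + card (A False \<inter> A True)"
    using card_Un_Int[OF fin fin] .
  also have "A False \<union> A True = {v \<in> lang u. length v = k}"
  proof -
    have "v @ [False] \<in> lang u \<or> v @ [True] \<in> lang u" if v: "v \<in> lang u" for v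
    proof -
      obtain a where "v @ [a] \<in> lang u" using lang_snoc_exists[OF v] by blast
      then show ?thesis by (cases a) auto
    qed
    then show ?thesis by (auto simp: A_def)
  qed
  also have "A False \<inter> A True = {v. length v = k \<and> right_special u v}"
    by (auto simp: A_def right_special_def dest: lang_appendD)
  finally show ?thesis .
qed

lemma right_special_unique:
  assumes "sturmian u" "right_special u r" "right_special u r'" "length r = length r'"
  shows "r = r'"
proof (cases "r = []")
  case False
  then have "card {v \<in> lang u. length v = Suc (length r)} = length r + 2"
    "card {v \<in> lang u. length v = length r} = length r + 1"
    using assms(1) unfolding sturmian_def by (auto simp flip: length_greater_0_conv)
  then have "card {v. length v = length r \<and> right_special u v} = 1"
    using card_lang_Suc[of u "length r"] by simp
  then obtain r0 where r0: "{v. length v = length r \<and> right_special u v} = {r0}"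
    by (rule card_1_singletonE)
  have "r \<in> {v. length v = length r \<and> right_special u v}"
    "r' \<in> {v. length v = length r \<and> right_special u v}"
    using assms(2-4) by simp_all
  then show ?thesis unfolding r0 by simp
qed (use assms(4) in simp)

lemma right_special_Cons_unique_left_extension:
  assumes "sturmian u" "right_special u (x # v)" "left_special u (v @ [c])" "y \<noteq> c"
    and "z # v @ [y] \<in> lang u"
  shows "z = x"
proof -
  have "z # v @ [c] \<in> lang u" using assms(3) by (cases z) (auto simp: left_special_def)
  with assms(4,5) have "right_special u (z # v)" by (cases y) (auto simp: right_special_def)
  then have "z # v = x # v" using right_special_unique assms(1,2) by (metis length_Cons)
  then show ?thesis by simp
qed

lemma not_significant_snoc:
  assumes "v \<in> lang u" "2 \<le> length v" "\<not> significant u v"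
  shows "\<not> significant u (v @ [y])"
proof -
  have "fol u (tl v) \<subseteq> fol u v" using assms fol_tl_subset[of u v] by (auto simp: significant_def)
  moreover have "tl (v @ [y]) = tl v @ [y]" using assms(2) by (cases v) auto
  ultimately have "fol u (tl (v @ [y])) \<subseteq> fol u (v @ [y])"
    using fol_snoc_mono by metis
  then show ?thesis using assms(2) by (intro not_significant_if_fol_tl_subset) auto
qed

lemma not_significant_right_special_Cons_snoc:
  assumes "sturmian u" "right_special u (x # v)" "left_special u (v @ [c])" "y \<noteq> c"
  shows "\<not> significant u (x # v @ [y])"
proof -
  have "fol u (v @ [y]) \<subseteq> fol u (x # v @ [y])"
    using fol_subset_Cons right_special_Cons_unique_left_extension[OF assms] by simp
  then show ?thesis by (intro not_significant_if_fol_tl_subset) auto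
qed

lemma left_special_seq_snoc:
  "left_special_seq u l \<Longrightarrow> 1 \<le> n \<Longrightarrow> left_special u (map l [1..<n] @ [l n])"
  unfolding left_special_seq_def by (metis le_add_diff_inverse2 map_append upt_Suc_append
      Suc_eq_plus1 list.map(1) list.map(2))

lemma sig_append_left:
  assumes "\<forall>k<length p. \<not> significant u (drop k (p @ W))"
    and "\<exists>k<length W. significant u (drop k W)"
  shows "sig u (p @ W) = sig u W"
proof -
  define K where "K = (LEAST k. k < length W \<and> significant u (drop k W))"
  have K: "K < length W \<and> significant u (drop K W)"
    unfolding K_def by (rule LeastI_ex) (use assms(2) in auto)
  have "(LEAST k. k < length (p @ W) \<and> significant u (drop k (p @ W))) = length p + K"
  proof (rule Least_equality)
    fix k assume k: "k < length (p @ W) \<and> significant u (drop k (p @ W))"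
    with assms(1) have "length p \<le> k" using not_less by blast
    with k have "K \<le> k - length p" unfolding K_def by (auto intro: Least_le)
    with \<open>length p \<le> k\<close> show "length p + K \<le> k" by simp
  qed (use K in simp)
  then show ?thesis by (simp add: sig_def K_def)
qed

theorem lemma4p11:
  fixes u l :: "nat \<Rightarrow> bool" and x w y :: bool and m n :: nat
  assumes "sturmian u"
    and "left_special_seq u l"
    and "1 \<le> m" and "m < n"
    and "right_special u (x # map l [1..<n])" and "significant u (x # map l [1..<n])"
    and "right_special u (w # map l [1..<m])" and "significant u (w # map l [1..<m])"
    and "\<forall>v. right_special u v \<and> significant u v \<longrightarrow> \<not> (m < length v \<and> length v < n)"
    and "y \<noteq> l n"
  shows "sig u (x # map l [1..<n] @ [y]) = sig u (w # map l [1..<m] @ [y])"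
proof -
  define P where "P = x # map l [1..<n]"
  define Q where "Q = w # map l [1..<m]"
  have "drop (n - m) P = Q"
    using right_special_unique[OF assms(1) right_special_drop[OF assms(5)] assms(7)] assms(3,4)
    by (simp add: P_def Q_def)
  then have P_split: "P @ [y] = take (n - m) P @ Q @ [y]"
    by (metis append_assoc append_take_drop_id)
  have "[y] \<in> lang u"
    using assms(5) lang_appendD[of P "[y]" u] by (cases y) (auto simp: right_special_def P_def)
  then have "\<exists>k<length (Q @ [y]). significant u (drop k (Q @ [y]))"
    by (intro exI[of _ "length Q"]) (simp add: significant_def)
  moreover have "\<not> significant u (drop k (P @ [y]))" if "k < n - m" for k
  proof (cases "k = 0")
    case True
    then show ?thesis
      using not_significant_right_special_Cons_snoc[OF assms(1,5)
          left_special_seq_snoc[OF assms(2)] assms(10)] assms(3,4)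
      by (simp add: P_def)
  next
    case False
    have rs: "right_special u (drop k P)" and len: "m < length (drop k P)" "length (drop k P) < n"
      using assms(5) right_special_drop that False by (auto simp: P_def)
    then have "\<not> significant u (drop k P)" using assms(9) by blast
    then have "\<not> significant u (drop k P @ [y])"
      using not_significant_snoc[OF right_special_in_lang[OF rs]] len(1) assms(3) by simp
    moreover have "drop k (P @ [y]) = drop k P @ [y]" using that by (simp add: P_def drop_Cons')
    ultimately show ?thesis by simp
  qed
  ultimately have "sig u (P @ [y]) = sig u (Q @ [y])"
    unfolding P_split using assms(4) by (intro sig_append_left) (auto simp: P_def)
  then show ?thesis by (simp add: P_def Q_def)
qed

end
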